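(* In any execution of Algorithm $\gamma$n-Burst, within any time interval $I^+$ during which at all times at least $n^2$ tasks of cost $\ell_{\max}$ are pending in $\gamma$n-Burst, each $\ell_{\max}$-task has at most one absolute task execution fully contained in $I^+$ (all such absolute task executions appear exactly once).
   Context: Model: $n$ processors with ids $1,\dots,n$ and a shared repository; tasks with ids, arrival times and costs $\ell_{\min}$ or $\ell_{\max}$ ($0<\ell_{\min}<\ell_{\max}$) are injected over time; processors may crash and restart (restarted processors remember only the algorithm and $n$). A task is pending if injected and its completion not yet reported; once reported it is immediately removed. A processor repeatedly obtains the pending set, chooses a task, executes it (a task of cost $\ell$ takes time $\ell/s$ with speedup $s>1$) and reports it; execution is non-preemptive and a crash loses progress. An absolute task execution of $\tau$ is an interval $[t,t']$ in which a processor schedules $\tau$ at $t$ and reports it at $t'$ without stopping in $[t,t')$. Algorithm $\gamma$n-Burst for processor $p$, with $\gamma=\lceil\frac{\ell_{\max}-s\ell_{\min}}{(s-1)\ell_{\min}}\rceil$: counter $c$ set to $0$ on (re)start; each cycle it forms lists $L_{\min},L_{\max}$ of pending tasks of cost $\ell_{\min},\ell_{\max}$ sorted by arrival. Case 1 (both lists $<n^2$): if previous task had cost $\ell_{\min}$, perform task at position $(pn)\bmod|L_{\max}|$ of $L_{\max}$, $c\gets0$; else task at position $(pn)\bmod|L_{\min}|$ of $L_{\min}$, $c\gets\min(c+1,\gamma)$. Case 2 ($|L_{\min}|\ge n^2>|L_{\max}|$): position $pn$ of $L_{\min}$, $c\gets\min(c+1,\gamma)$. Case 3 ($|L_{\max}|\ge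 n^2>|L_{\min}|$): position $pn$ of $L_{\max}$, $c\gets0$. Case 4 (both $\ge n^2$): if $c=\gamma$, position $pn$ of $L_{\max}$, $c\gets0$; else position $pn$ of $L_{\min}$, $c\gets\min(c+1,\gamma)$. Then report the task. *)

theory Defs
  imports Complex_Main
begin

text \<open>Tasks are identified by natural numbers; a task set is described by the set
  Inj of injected tasks, their arrival (= injection) times arr and their costs cst.  The behaviour of processor p is a (possibly finite)
  timed sequence of steps  run p k = Some (t, a)  (time t, action a).\<close>

datatype act = Restart | Sched nat | Report nat | Poll | Crash

definition sorted_by_arrival :: "(nat \<Rightarrow> real) \<Rightarrow> nat set \<Rightarrow> nat list" where
  "sorted_by_arrival arr S =
     (THE xs. set xs = S \<and> sorted_wrt (\<lambda>x y. arr x < arr y \<or> (arr x = arr y \<and> x < y)) xs)"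

text \<open>Element at (1-based, cyclic) position j of a list: position j is the j-th element,
  positions are taken modulo the length of the list.\<close>
definition pick :: "nat \<Rightarrow> nat list \<Rightarrow> nat" where
  "pick j xs = xs ! ((j - 1) mod length xs)"

definition burst_gamma :: "real \<Rightarrow> real \<Rightarrow> real \<Rightarrow> int" where
  "burst_gamma lmin lmax s = \<lceil>(lmax - s * lmin) / ((s - 1) * lmin)\<rceil>"

text \<open>One cycle of gamma n-Burst for processor p with local state (prev, c), where prev is
  the cost of the previously performed task (None after a (re)start) and c the counter,
  given the lists Lmin, Lmax.\<close>
definition burst_choice ::
  "nat \<Rightarrow> real \<Rightarrow> real \<Rightarrow> real \<Rightarrow> nat \<Rightarrow> real option \<Rightarrow> int \<Rightarrow> nat list \<Rightarrow> nat list
   \<Rightarrow> (nat \<times> int) option" where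
  "burst_choice n lmin lmax s p prev c Lmin Lmax =
    (let g = burst_gamma lmin lmax s; N = n^2; j = p * n;
         takeMax = Some (pick j Lmax, 0::int);
         takeMin = Some (pick j Lmin, min (c + 1) g)
     in if length Lmin < N \<and> length Lmax < N then
          (if Lmin = [] \<and> Lmax = [] then None
           else if Lmax \<noteq> [] \<and> (prev = Some lmin \<or> Lmin = []) then takeMax
           else takeMin)
        else if length Lmax < N then takeMin
        else if length Lmin < N then takeMax
        else if c = g then takeMax else takeMin)"

definition pending ::
  "nat set \<Rightarrow> (nat \<Rightarrow> real) \<Rightarrow> (nat \<Rightarrow> nat \<Rightarrow> (real \<times> act) option) \<Rightarrow> real \<Rightarrow> nat set" where
  "pending Inj arr run t =
     {\<tau> \<in> Inj. arr \<tau> \<le> t \<and> \<not> (\<exists>p k t'. run p k = Some (t', Report \<tau>) \<and> t' \<le> t)}"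

definition Lmin_at where
  "Lmin_at lmin Inj arr cst run t =
     sorted_by_arrival arr {\<tau> \<in> pending Inj arr run t. cst \<tau> = lmin}"

definition Lmax_at where
  "Lmax_at lmax Inj arr cst run t =
     sorted_by_arrival arr {\<tau> \<in> pending Inj arr run t. cst \<tau> = lmax}"

definition choice_at where
  "choice_at n lmin lmax s Inj arr cst run p prev c t =
     burst_choice n lmin lmax s p prev c
       (Lmin_at lmin Inj arr cst run t) (Lmax_at lmax Inj arr cst run t)"

text \<open>Local state (prev, c) of processor p before its step k.\<close>
primrec lstate ::
  "nat \<Rightarrow> real \<Rightarrow> real \<Rightarrow> real \<Rightarrow> nat set \<Rightarrow> (nat \<Rightarrow> real) \<Rightarrow> (nat \<Rightarrow> real)
   \<Rightarrow> (nat \<Rightarrow> nat \<Rightarrow> (real \<times> act) option) \<Rightarrow> nat \<Rightarrow> nat \<Rightarrow> real option \<times> int" where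
  "lstate n lmin lmax s Inj arr cst run p 0 = (None, 0)"
| "lstate n lmin lmax s Inj arr cst run p (Suc k) =
     (case run p k of
        None \<Rightarrow> (None, 0)
      | Some (t, a) \<Rightarrow>
          (case a of
             Restart \<Rightarrow> (None, 0)
           | Crash \<Rightarrow> (None, 0)
           | Sched \<tau> \<Rightarrow>
               (let (prev, c) = lstate n lmin lmax s Inj arr cst run p k in
                  (Some (cst \<tau>),
                   (case choice_at n lmin lmax s Inj arr cst run p prev c t of
                      Some (_, c') \<Rightarrow> c'
                    | None \<Rightarrow> c)))
           | _ \<Rightarrow> lstate n lmin lmax s Inj arr cst run p k))"

definition burst_exec ::
  "nat \<Rightarrow> real \<Rightarrow> real \<Rightarrow> real \<Rightarrow> nat set \<Rightarrow> (nat \<Rightarrow> real) \<Rightarrow> (nat \<Rightarrow> real)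
   \<Rightarrow> (nat \<Rightarrow> nat \<Rightarrow> (real \<times> act) option) \<Rightarrow> bool" where
  "burst_exec n lmin lmax s Inj arr cst run \<longleftrightarrow>
     (\<forall>\<tau>\<in>Inj. cst \<tau> = lmin \<or> cst \<tau> = lmax) \<and>
     (\<forall>t. finite {\<tau> \<in> Inj. arr \<tau> \<le> t}) \<and>
     (\<forall>p k. p \<notin> {1..n} \<longrightarrow> run p k = None) \<and>
     (\<forall>p k. run p (Suc k) \<noteq> None \<longrightarrow> run p k \<noteq> None) \<and>
     (\<forall>p k t a t' a'. run p k = Some (t, a) \<longrightarrow> run p (Suc k) = Some (t', a') \<longrightarrow> t \<le> t') \<and>
     (\<forall>p t a. run p 0 = Some (t, a) \<longrightarrow> a = Restart) \<and>
     (\<forall>p k t a. run p (Suc k) = Some (t, a) \<longrightarrow>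
        (\<exists>t0 a0. run p k = Some (t0, a0) \<and>
          (case a of
             Restart \<Rightarrow> a0 = Crash
           | Crash \<Rightarrow> a0 \<noteq> Crash \<and> (\<forall>\<tau>. a0 = Sched \<tau> \<longrightarrow> t < t0 + cst \<tau> / s)
           | Report \<tau> \<Rightarrow> a0 = Sched \<tau> \<and> t = t0 + cst \<tau> / s
           | Sched \<tau> \<Rightarrow> (a0 = Restart \<or> a0 = Poll \<or> (\<exists>\<sigma>. a0 = Report \<sigma>)) \<and>
                (let (prev, c) = lstate n lmin lmax s Inj arr cst run p (Suc k) in
                   \<exists>c'. choice_at n lmin lmax s Inj arr cst run p prev c t = Some (\<tau>, c'))
           | Poll \<Rightarrow> (a0 = Restart \<or> a0 = Poll \<or> (\<exists>\<sigma>. a0 = Report \<sigma>)) \<and>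
                (let (prev, c) = lstate n lmin lmax s Inj arr cst run p (Suc k) in
                   choice_at n lmin lmax s Inj arr cst run p prev c t = None))))"

text \<open>Absolute task execution of \<tau> by processor p, over the interval [t, t']:
  p schedules \<tau> at t (step k) and its very next step is reporting \<tau> at t'
  (so p does not stop/crash in between).\<close>
definition abs_exec ::
  "(nat \<Rightarrow> nat \<Rightarrow> (real \<times> act) option) \<Rightarrow> nat \<Rightarrow> nat \<Rightarrow> nat \<Rightarrow> real \<Rightarrow> real \<Rightarrow> bool" where
  "abs_exec run p k \<tau> t t' \<longleftrightarrow>
     run p k = Some (t, Sched \<tau>) \<and> run p (Suc k) = Some (t', Report \<tau>)"

end

theory Submission
  imports Defs "HOL-Library.Product_Lexorder"
begin

text \<open>While at least \<open>n\<^sup>2\<close> tasks of cost \<open>\<ell>\<^sub>max\<close> are pending, a processor \<open>p\<close> that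
  schedules an \<open>\<ell>\<^sub>max\<close>-task \<open>\<tau>\<close> takes it from position \<open>pn\<close> of \<open>L\<^sub>max\<close>, so exactly
  \<open>pn - 1\<close> pending \<open>\<ell>\<^sub>max\<close>-tasks arrived before \<open>\<tau>\<close>. If \<open>\<tau>\<close> is scheduled again at
  \<open>t\<^sub>2\<close> while the first execution started at \<open>t\<^sub>1 \<le> t\<^sub>2\<close> still runs, no task arriving
  before \<open>\<tau>\<close> can join the pending set in between, and the tasks that leave it are
  reported by pairwise distinct processors other than the first executor, since no processor
  completes two \<open>\<ell>\<^sub>max\<close>-tasks within time \<open>\<ell>\<^sub>max/s\<close>. So the position drops by less than
  \<open>n\<close>, which forces the same processor; and a processor cannot reschedule a task it is still
  executing.\<close>

text \<open>Under the lexicographic order on pairs, this key realises the tie-broken arrival order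
  of \<open>sorted_by_arrival\<close>.\<close>

definition arrival_key :: "(nat \<Rightarrow> real) \<Rightarrow> nat \<Rightarrow> real \<times> nat" where
  "arrival_key arr x = (arr x, x)"

lemma inj_arrival_key: "inj (arrival_key arr)"
  by (rule injI) (simp add: arrival_key_def)

lemma sorted_by_arrival:
  assumes "finite S"
  shows "set (sorted_by_arrival arr S) = S"
    and "sorted_wrt (<) (map (arrival_key arr) (sorted_by_arrival arr S))"
proof -
  define xs where "xs = sort_key (arrival_key arr) (sorted_list_of_set S)"
  have xs: "set xs = S \<and> sorted_wrt (<) (map (arrival_key arr) xs)"
    using assms inj_on_subset[OF inj_arrival_key]
    by (simp add: xs_def strict_sorted_iff distinct_map)
  have ordered: "(\<lambda>x y. arr x < arr y \<or> (arr x = arr y \<and> x < y)) =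
      (\<lambda>x y. arrival_key arr x < arrival_key arr y)"
    by (auto simp: arrival_key_def fun_eq_iff)
  have "sorted_by_arrival arr S = xs"
    unfolding sorted_by_arrival_def ordered
  proof (rule the_equality)
    fix ys
    assume "set ys = S \<and> sorted_wrt (\<lambda>x y. arrival_key arr x < arrival_key arr y) ys"
    then have "map (arrival_key arr) ys = map (arrival_key arr) xs"
      using xs by (intro strict_sorted_equal) (simp_all add: sorted_wrt_map)
    then show "ys = xs"
      by (simp add: inj_arrival_key)
  qed (use xs in \<open>simp add: sorted_wrt_map\<close>)
  with xs show "set (sorted_by_arrival arr S) = S"
    and "sorted_wrt (<) (map (arrival_key arr) (sorted_by_arrival arr S))"
    by simp_all
qed

lemma card_less_nth_strict_sorted:
  fixes f :: "'a \<Rightarrow> 'b::linorder"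
  assumes "sorted_wrt (<) (map f xs)" and "i < length xs"
  shows "card {y \<in> set xs. f y < f (xs ! i)} = i"
proof -
  have distinct: "distinct xs"
    using assms(1) by (simp add: strict_sorted_iff distinct_map)
  have less_iff: "f (xs ! j) < f (xs ! i) \<longleftrightarrow> j < i" if "j < length xs" for j
    using that assms sorted_wrt_nth_less[OF assms(1), of j i] sorted_wrt_nth_less[OF assms(1), of i j]
    by (cases j i rule: linorder_cases) auto
  have "{y \<in> set xs. f y < f (xs ! i)} = (!) xs ` {0..<i}"
    using assms(2) by (auto simp: in_set_conv_nth less_iff) (use less_trans in blast)
  also have "\<dots> = set (take i xs)"
    using assms(2) by (simp add: nth_image)
  finally show ?thesis
    using distinct assms(2) by (simp add: distinct_card)
qed
lemmas burst_exec_first_step = burst_exec_def[THEN iffD1, THEN conjunct2, THEN conjunct2,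
  THEN conjunct2, THEN conjunct2, THEN conjunct2, THEN conjunct1, rule_format]

lemmas burst_exec_step = burst_exec_def[THEN iffD1, THEN conjunct2, THEN conjunct2,
  THEN conjunct2, THEN conjunct2, THEN conjunct2, THEN conjunct2, rule_format]

lemma burst_exec_report:
  assumes "burst_exec n lmin lmax s Inj arr cst run" and "run p (Suc k) = Some (t, Report \<tau>)"
  shows "\<exists>t0. run p k = Some (t0, Sched \<tau>) \<and> t = t0 + cst \<tau> / s"
  using burst_exec_step[OF assms] by auto

lemma burst_exec_sched_choice:
  assumes "burst_exec n lmin lmax s Inj arr cst run" and "run p k = Some (t, Sched \<tau>)"
  shows "\<exists>prev c c'. choice_at n lmin lmax s Inj arr cst run p prev c t = Some (\<tau>, c')"
proof (cases k)
  case 0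
  with burst_exec_first_step[OF assms(1)] assms(2) have "Sched \<tau> = Restart"
    by blast
  then show ?thesis
    by simp
next
  case (Suc k0)
  with burst_exec_step[OF assms(1), of p k0] assms(2) show ?thesis
    by (auto split: prod.splits)
qed

lemma burst_exec_proc_range:
  assumes "burst_exec n lmin lmax s Inj arr cst run" and "run p k = Some x"
  shows "p \<in> {1..n}"
  using assms unfolding burst_exec_def by auto

lemma burst_exec_finite_pending:
  assumes "burst_exec n lmin lmax s Inj arr cst run"
  shows "finite (pending Inj arr run t)"
proof -
  have "finite {\<tau> \<in> Inj. arr \<tau> \<le> t}"
    using assms unfolding burst_exec_def by blast
  then show ?thesis
    by (rule finite_subset[rotated]) (auto simp: pending_def)
qed

lemma burst_exec_prev_step:
  assumes "burst_exec n lmin lmax s Inj arr cst run" and "run p (Suc k) = Some (t', a')"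
  shows "\<exists>t a. run p k = Some (t, a) \<and> t \<le> t'"
proof -
  have "run p k \<noteq> None"
    using assms unfolding burst_exec_def by blast
  then obtain t a where step: "run p k = Some (t, a)"
    by auto
  moreover have "t \<le> t'"
    using assms step unfolding burst_exec_def by blast
  ultimately show ?thesis
    by blast
qed

lemma burst_exec_time_mono:
  assumes "burst_exec n lmin lmax s Inj arr cst run" and "k \<le> k'" and "run p k' = Some (t', a')"
  shows "\<exists>t a. run p k = Some (t, a) \<and> t \<le> t'"
  using assms(2,3)
proof (induction k' arbitrary: t' a')
  case (Suc m)
  show ?case
  proof (cases "k = Suc m")
    case False
    obtain t0 a0 where "run p m = Some (t0, a0)" and "t0 \<le> t'"
      using burst_exec_prev_step[OF assms(1) Suc.prems(2)] by blast
    with Suc.IH[of t0 a0] False Suc.prems(1) show ?thesis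
      by fastforce
  qed (use Suc.prems in auto)
qed auto

lemma reports_spaced_by_cost:
  assumes "burst_exec n lmin lmax s Inj arr cst run"
    and "run q j = Some (u, Report \<sigma>)" and "run q j' = Some (u', Report \<sigma>')" and "j < j'"
  shows "u + cst \<sigma>' / s \<le> u'"
proof -
  obtain j0 where j0: "j' = Suc j0" and "j \<le> j0"
    using assms(4) by (cases j') auto
  obtain u0 where u0: "run q j0 = Some (u0, Sched \<sigma>')" "u' = u0 + cst \<sigma>' / s"
    using burst_exec_report[OF assms(1) assms(3)[unfolded j0]] by blast
  have "u \<le> u0"
    using burst_exec_time_mono[OF assms(1) \<open>j \<le> j0\<close> u0(1)] assms(2) by auto
  with u0(2) show ?thesis
    by simp
qed

lemma no_step_inside_abs_exec:
  assumes "burst_exec n lmin lmax s Inj arr cst run" and "abs_exec run p k \<tau> t t'"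
    and "run p j = Some (u, a)" and "t < u" and "u < t'"
  shows False
proof -
  have sched: "run p k = Some (t, Sched \<tau>)" and report: "run p (Suc k) = Some (t', Report \<tau>)"
    using assms(2) by (simp_all add: abs_exec_def)
  show False
  proof (cases "j \<le> k")
    case True
    then show False
      using burst_exec_time_mono[OF assms(1) True sched] assms(3,4) by auto
  next
    case False
    then have "Suc k \<le> j"
      by simp
    then show False
      using burst_exec_time_mono[OF assms(1) _ assms(3)] report assms(5) by fastforce
  qed
qed

lemma burst_choice_long_Lmax:
  assumes "n^2 \<le> length Lmax" and "burst_choice n lmin lmax s p prev c Lmin Lmax = Some (x, c')"
  shows "x = pick (p * n) Lmax \<or> (x = pick (p * n) Lmin \<and> n^2 \<le> length Lmin)"
  using assms unfolding burst_choice_def Let_def by (auto split: if_splits)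

definition earlier_pending ::
  "nat set \<Rightarrow> (nat \<Rightarrow> real) \<Rightarrow> (nat \<Rightarrow> real) \<Rightarrow> (nat \<Rightarrow> nat \<Rightarrow> (real \<times> act) option)
   \<Rightarrow> real \<Rightarrow> nat \<Rightarrow> real \<Rightarrow> nat set" where
  "earlier_pending Inj arr cst run l \<tau> t =
     {\<sigma> \<in> pending Inj arr run t. cst \<sigma> = l \<and> arrival_key arr \<sigma> < arrival_key arr \<tau>}"

lemma earlier_pending_antimono:
  assumes "arr \<tau> \<le> t" and "t \<le> t'"
  shows "earlier_pending Inj arr cst run l \<tau> t' \<subseteq> earlier_pending Inj arr cst run l \<tau> t"
  using assms by (force simp: earlier_pending_def pending_def arrival_key_def)

lemma reported_between_if_pending_left:
  assumes "\<sigma> \<in> pending Inj arr run t" and "\<sigma> \<notin> pending Inj arr run t'" and "t \<le> t'"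
  shows "\<exists>q j u. run q j = Some (u, Report \<sigma>) \<and> t < u \<and> u \<le> t'"
proof -
  obtain q j u where "run q j = Some (u, Report \<sigma>)" and "u \<le> t'"
    using assms by (auto simp: pending_def)
  moreover have "\<not> u \<le> t"
    using assms(1) calculation(1) by (auto simp: pending_def)
  ultimately show ?thesis
    by (meson not_le)
qed

lemma sched_position_under_lmax_load:
  assumes be: "burst_exec n lmin lmax s Inj arr cst run" and "lmin < lmax"
    and sched: "run p k = Some (t, Sched \<tau>)" and "cst \<tau> = lmax"
    and load: "n^2 \<le> card {\<sigma> \<in> pending Inj arr run t. cst \<sigma> = lmax}"
  shows "\<tau> \<in> pending Inj arr run t"
    and "card (earlier_pending Inj arr cst run lmax \<tau> t) + 1 = p * n"
proof -
  define Lmin where "Lmin = Lmin_at lmin Inj arr cst run t"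
  define Lmax where "Lmax = Lmax_at lmax Inj arr cst run t"
  have fin: "finite {\<sigma> \<in> pending Inj arr run t. cst \<sigma> = l}" for l
    using burst_exec_finite_pending[OF be] by simp
  have Lmin_set: "set Lmin = {\<sigma> \<in> pending Inj arr run t. cst \<sigma> = lmin}"
    using sorted_by_arrival(1)[OF fin] by (simp add: Lmin_def Lmin_at_def)
  have Lmax_set: "set Lmax = {\<sigma> \<in> pending Inj arr run t. cst \<sigma> = lmax}"
    and Lmax_sorted: "sorted_wrt (<) (map (arrival_key arr) Lmax)"
    using sorted_by_arrival[OF fin] by (simp_all add: Lmax_def Lmax_at_def)
  have "distinct Lmax"
    using Lmax_sorted by (simp add: strict_sorted_iff distinct_map)
  then have long: "n^2 \<le> length Lmax"
    using load Lmax_set distinct_card by metis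
  obtain prev c c' where choice: "burst_choice n lmin lmax s p prev c Lmin Lmax = Some (\<tau>, c')"
    using burst_exec_sched_choice[OF be sched] by (auto simp: choice_at_def Lmin_def Lmax_def)
  have "p \<in> {1..n}"
    using burst_exec_proc_range[OF be sched] .
  then have pos: "1 \<le> p * n" and "p * n \<le> n^2"
    by (auto simp: power2_eq_square)
  then have idx: "p * n - 1 < length Lmax"
    using long by linarith
  have "\<tau> \<notin> set Lmin"
    using Lmin_set \<open>cst \<tau> = lmax\<close> \<open>lmin < lmax\<close> by auto
  moreover have "pick (p * n) Lmin \<in> set Lmin" if "n^2 \<le> length Lmin"
  proof -
    have "0 < length Lmin"
      using that pos by (metis le_trans less_one not_less mult_eq_0_iff power2_eq_square)
    then show ?thesis
      by (simp add: pick_def)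
  qed
  ultimately have "\<tau> = pick (p * n) Lmax"
    using burst_choice_long_Lmax[OF long choice] by auto
  then have tau: "\<tau> = Lmax ! (p * n - 1)"
    using idx by (simp add: pick_def)
  then show "\<tau> \<in> pending Inj arr run t"
    using idx Lmax_set nth_mem by fastforce
  have "earlier_pending Inj arr cst run lmax \<tau> t =
      {\<sigma> \<in> set Lmax. arrival_key arr \<sigma> < arrival_key arr (Lmax ! (p * n - 1))}"
    using Lmax_set tau by (auto simp: earlier_pending_def)
  then show "card (earlier_pending Inj arr cst run lmax \<tau> t) + 1 = p * n"
    using card_less_nth_strict_sorted[OF Lmax_sorted idx] pos by simp
qed

lemma card_reported_during_abs_exec:
  assumes be: "burst_exec n lmin lmax s Inj arr cst run" and "0 < s"
    and exec: "abs_exec run p k \<tau> t t'"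
    and E: "\<And>\<sigma>. \<sigma> \<in> E \<Longrightarrow>
      cst \<tau> \<le> cst \<sigma> \<and> (\<exists>q j u. run q j = Some (u, Report \<sigma>) \<and> t < u \<and> u < t')"
  shows "card E \<le> n - 1"
proof -
  define reports where
    "reports \<sigma> q \<longleftrightarrow> (\<exists>j u. run q j = Some (u, Report \<sigma>) \<and> t < u \<and> u < t')" for \<sigma> q
  have duration: "t' - t = cst \<tau> / s"
    using exec burst_exec_report[OF be] by (fastforce simp: abs_exec_def)
  have p: "p \<in> {1..n}"
    using exec burst_exec_proc_range[OF be] by (auto simp: abs_exec_def)
  have "card E \<le> card ({1..n} - {p})"
  proof (rule card_le_if_inj_on_rel[where r = reports])
    show "\<exists>q. q \<in> {1..n} - {p} \<and> reports \<sigma> q" if "\<sigma> \<in> E" for \<sigma>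
      using E[OF that] burst_exec_proc_range[OF be] no_step_inside_abs_exec[OF be exec]
      unfolding reports_def by blast
  next
    have no_two_reports: False
      if "run q j = Some (u, Report \<sigma>)" "t < u" and "run q j' = Some (u', Report \<sigma>')" "u' < t'"
        and "j < j'" and "\<sigma>' \<in> E" for q j j' u u' \<sigma> \<sigma>'
    proof -
      have "cst \<tau> / s \<le> cst \<sigma>' / s"
        using E[OF \<open>\<sigma>' \<in> E\<close>] \<open>0 < s\<close> by (simp add: divide_right_mono)
      then show False
        using reports_spaced_by_cost[OF be that(1,3,5)] that(2,4) duration by linarith
    qed
    fix \<sigma>1 \<sigma>2 q
    assume "\<sigma>1 \<in> E" "\<sigma>2 \<in> E" "reports \<sigma>1 q" "reports \<sigma>2 q"
    then obtain j1 u1 j2 u2 where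
        r1: "run q j1 = Some (u1, Report \<sigma>1)" "t < u1" "u1 < t'"
      and r2: "run q j2 = Some (u2, Report \<sigma>2)" "t < u2" "u2 < t'"
      unfolding reports_def by blast
    show "\<sigma>1 = \<sigma>2"
    proof (cases j1 j2 rule: linorder_cases)
      case less
      with no_two_reports[OF r1(1,2) r2(1,3)] \<open>\<sigma>2 \<in> E\<close> show ?thesis
        by blast
    next
      case equal
      with r1 r2 show ?thesis
        by simp
    next
      case greater
      with no_two_reports[OF r2(1,2) r1(1,3)] \<open>\<sigma>1 \<in> E\<close> show ?thesis
        by blast
    qed
  qed simp
  with p show ?thesis
    by simp
qed

lemma earlier_pending_drop_during_abs_exec:
  assumes be: "burst_exec n lmin lmax s Inj arr cst run" and "0 < s"
    and exec: "abs_exec run p k \<tau> t t'" and "arr \<tau> \<le> t" and "t \<le> t2" and "t2 < t'"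
  defines "B \<equiv> earlier_pending Inj arr cst run (cst \<tau>) \<tau>"
  shows "B t2 \<subseteq> B t" and "card (B t) \<le> card (B t2) + (n - 1)"
proof -
  show "B t2 \<subseteq> B t"
    unfolding B_def using earlier_pending_antimono assms(4,5) .
  moreover have "finite (B t)"
    using burst_exec_finite_pending[OF be] by (simp add: B_def earlier_pending_def)
  ultimately have "card (B t) = card (B t2) + card (B t - B t2)"
    by (metis card_Diff_subset card_mono finite_subset le_add_diff_inverse)
  moreover have "card (B t - B t2) \<le> n - 1"
  proof (rule card_reported_during_abs_exec[OF be \<open>0 < s\<close> exec])
    fix \<sigma>
    assume "\<sigma> \<in> B t - B t2"
    then have "\<sigma> \<in> pending Inj arr run t" "\<sigma> \<notin> pending Inj arr run t2" "cst \<sigma> = cst \<tau>"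
      using assms(5) by (auto simp: B_def earlier_pending_def pending_def)
    then show "cst \<tau> \<le> cst \<sigma> \<and> (\<exists>q j u. run q j = Some (u, Report \<sigma>) \<and> t < u \<and> u < t')"
      using reported_between_if_pending_left assms(5,6) by fastforce
  qed
  ultimately show "card (B t) \<le> card (B t2) + (n - 1)"
    by linarith
qed

lemma abs_execs_same_step:
  assumes be: "burst_exec n lmin lmax s Inj arr cst run"
    and exec1: "abs_exec run p k1 \<tau>1 t1 t1'" and exec2: "abs_exec run p k2 \<tau>2 t2 t2'"
    and "t1 \<le> t2" and "t2 < t1'" and "t2 < t2'"
  shows "k1 = k2"
proof (rule ccontr)
  note steps = exec1[unfolded abs_exec_def] exec2[unfolded abs_exec_def]
  assume "k1 \<noteq> k2"
  then consider "Suc k1 \<le> k2" | "Suc k2 \<le> k1"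
    by linarith
  then show False
  proof cases
    case 1
    with burst_exec_time_mono[OF be 1] steps \<open>t2 < t1'\<close> show False
      by fastforce
  next
    case 2
    with burst_exec_time_mono[OF be 2] steps \<open>t1 \<le> t2\<close> \<open>t2 < t2'\<close> show False
      by fastforce
  qed
qed

lemma abs_execs_coincide_if_ordered:
  assumes be: "burst_exec n lmin lmax s Inj arr cst run"
    and "0 < lmin" and "lmin < lmax" and "1 < s"
    and load: "\<forall>t\<in>I. n^2 \<le> card {\<sigma> \<in> pending Inj arr run t. cst \<sigma> = lmax}"
    and "cst \<tau> = lmax"
    and exec1: "abs_exec run p1 k1 \<tau> t1 t1'" and "{t1..t1'} \<subseteq> I"
    and exec2: "abs_exec run p2 k2 \<tau> t2 t2'" and "{t2..t2'} \<subseteq> I"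
    and "t1 \<le> t2"
  shows "p1 = p2 \<and> k1 = k2"
proof -
  note steps = exec1[unfolded abs_exec_def] exec2[unfolded abs_exec_def]
  have "0 < lmax / s"
    using assms(2-4) by simp
  moreover have "t1' = t1 + lmax / s" and "t2' = t2 + lmax / s"
    using steps burst_exec_report[OF be] \<open>cst \<tau> = lmax\<close> by fastforce+
  ultimately have "t1 \<in> I" and "t2 \<in> I" and "t2 < t2'"
    using assms(8,10) by auto
  define B where "B = earlier_pending Inj arr cst run lmax \<tau>"
  have pending1: "\<tau> \<in> pending Inj arr run t1" and pos1: "card (B t1) + 1 = p1 * n"
    using sched_position_under_lmax_load[OF be \<open>lmin < lmax\<close> _ \<open>cst \<tau> = lmax\<close>]
      steps load \<open>t1 \<in> I\<close> unfolding B_def by blast+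
  have pending2: "\<tau> \<in> pending Inj arr run t2" and pos2: "card (B t2) + 1 = p2 * n"
    using sched_position_under_lmax_load[OF be \<open>lmin < lmax\<close> _ \<open>cst \<tau> = lmax\<close>]
      steps load \<open>t2 \<in> I\<close> unfolding B_def by blast+
  have "t2 < t1'"
    using pending2 steps by (force simp: pending_def)
  have "arr \<tau> \<le> t1"
    using pending1 by (simp add: pending_def)
  from earlier_pending_drop_during_abs_exec[OF be _ exec1 this \<open>t1 \<le> t2\<close> \<open>t2 < t1'\<close>]
  have "card (B t2) \<le> card (B t1)" and "card (B t1) \<le> card (B t2) + (n - 1)"
    using \<open>1 < s\<close> \<open>cst \<tau> = lmax\<close> burst_exec_finite_pending[OF be]
    by (auto simp: B_def earlier_pending_def intro: card_mono)
  moreover have "1 \<le> n"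
    using pos1 by (cases n) auto
  ultimately have "p2 * n \<le> p1 * n" and "p1 * n < p2 * n + n"
    using pos1 pos2 by linarith+
  then have "p2 \<le> p1" and "p1 < Suc p2"
    using \<open>1 \<le> n\<close> mult_less_cancel2[of p1 n "Suc p2"] by simp_all
  then have "p1 = p2"
    by simp
  with abs_execs_same_step[OF be exec1] exec2 \<open>t1 \<le> t2\<close> \<open>t2 < t1'\<close> \<open>t2 < t2'\<close> show ?thesis
    by blast
qed

theorem lemma11:
  fixes n :: nat and lmin lmax s :: real and Inj :: "nat set"
    and arr cst :: "nat \<Rightarrow> real" and run :: "nat \<Rightarrow> nat \<Rightarrow> (real \<times> act) option"
    and I :: "real set" and \<tau> p1 k1 p2 k2 :: nat and t1 t1' t2 t2' :: real
  assumes "n \<ge> 1" and "0 < lmin" and "lmin < lmax" and "1 < s"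
    and "burst_exec n lmin lmax s Inj arr cst run"
    and "\<forall>x\<in>I. \<forall>z\<in>I. {x..z} \<subseteq> I"
    and "\<forall>t\<in>I. card {\<sigma> \<in> pending Inj arr run t. cst \<sigma> = lmax} \<ge> n^2"
    and "\<tau> \<in> Inj" and "cst \<tau> = lmax"
    and "abs_exec run p1 k1 \<tau> t1 t1'" and "{t1..t1'} \<subseteq> I"
    and "abs_exec run p2 k2 \<tau> t2 t2'" and "{t2..t2'} \<subseteq> I"
  shows "p1 = p2 \<and> k1 = k2"
proof (cases "t1 \<le> t2")
  case True
  then show ?thesis
    using abs_execs_coincide_if_ordered[OF assms(5,2-4,7,9-13)] by blast
next
  case False
  then show ?thesis
    using abs_execs_coincide_if_ordered[OF assms(5,2-4,7,9,12,13,10,11)] by simp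
qed

end
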